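(* For every $k\geq 4$, the groups $\mathrm{FB}_k$ and $\mathrm{PFB}_k$ have trivial virtual centres.
   Context: $\mathrm{FB}_k=\langle \sigma_1,\ldots,\sigma_{k-1}\mid \sigma_i^2=1,\ [\sigma_i,\sigma_j]=1 \text{ whenever } |i-j|\ge 2\rangle$, and $\mathrm{PFB}_k$ is the kernel of the homomorphism $\mathrm{FB}_k\to\mathrm{Sym}(k)$ sending $\sigma_i$ to $(i,i+1)$. The virtual centre $\mathrm{VZ}(G)$ of a group $G$ is the set of elements of $G$ that centralise some finite-index subgroup of $G$. *)

theory Defs
  imports "HOL-Algebra.Sym_Groups" "HOL-Combinatorics.Transposition"
begin

text \<open>Words in the generators sigma_1, ..., sigma_(k-1), encoded by their indices.\<close>
definition fb_words :: "nat \<Rightarrow> nat list set" where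
  "fb_words k = {w. set w \<subseteq> {1..<k}}"

inductive fb_step :: "nat \<Rightarrow> nat list \<Rightarrow> nat list \<Rightarrow> bool" for k where
  cancel: "i \<in> {1..<k} \<Longrightarrow> fb_step k (xs @ [i, i] @ ys) (xs @ ys)"
| commute: "i \<in> {1..<k} \<Longrightarrow> j \<in> {1..<k} \<Longrightarrow> i + 2 \<le> j \<or> j + 2 \<le> i \<Longrightarrow>
     fb_step k (xs @ [i, j] @ ys) (xs @ [j, i] @ ys)"

definition fb_rel :: "nat \<Rightarrow> (nat list \<times> nat list) set" where
  "fb_rel k = {(u, v). u \<in> fb_words k \<and> v \<in> fb_words k \<and>
      (u, v) \<in> ({(x, y). fb_step k x y} \<union> {(x, y). fb_step k y x})\<^sup>*}"

definition FB :: "nat \<Rightarrow> nat list set monoid" where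
  "FB k = \<lparr> carrier = fb_words k // fb_rel k,
            mult = (\<lambda>A B. \<Union>a\<in>A. \<Union>b\<in>B. fb_rel k `` {a @ b}),
            one = fb_rel k `` {[]} \<rparr>"

fun word_perm :: "nat list \<Rightarrow> nat \<Rightarrow> nat" where
  "word_perm [] = id"
| "word_perm (i # w) = transpose i (Suc i) \<circ> word_perm w"

definition fb_to_sym :: "nat \<Rightarrow> nat list set \<Rightarrow> nat \<Rightarrow> nat" where
  "fb_to_sym k A = word_perm (SOME w. w \<in> A)"

definition PFB :: "nat \<Rightarrow> nat list set monoid" where
  "PFB k = (FB k)\<lparr> carrier := kernel (FB k) (sym_group k) (fb_to_sym k) \<rparr>"

definition virtual_centre :: "('a, 'b) monoid_scheme \<Rightarrow> 'a set" where
  "virtual_centre G = {g \<in> carrier G. \<exists>H. subgroup H G \<and> finite (rcosets\<^bsub>G\<^esub> H) \<and>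
      (\<forall>h\<in>H. g \<otimes>\<^bsub>G\<^esub> h = h \<otimes>\<^bsub>G\<^esub> g)}"

end

theory Submission
  imports Defs
begin

(* Reading a word from the right and stacking each letter on the two
   strands it exchanges, or removing it when it already lies on top of both, gives a heap that is
   invariant under the defining relations. For a reduced word (no letter can be commuted next to
   an equal one) the heap just lists the letters strand by strand, so it counts them.
   A nontrivial g is represented by a nonempty reduced word r beginning with some sigma_b. As
   k >= 4, there is a pure word y, a power of sigma_a sigma_(a+-1) or of
   sigma_a sigma_(a+-1) sigma_(a+-2), all of whose powers are reduced, begin only with sigma_a
   and end only with sigma_c, such that exactly one of r y^n and y^n r is reduced; in the other
   two letters cancel, so the heaps differ and g commutes with no positive power of y. Every
   finite-index subgroup contains a positive power of y, and y lies in PFB_k, so g centralises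
   no finite-index subgroup of FB_k or PFB_k. *)

section \<open>Heaps of flat braid words\<close>

definition near :: "nat \<Rightarrow> nat \<Rightarrow> bool" where
  "near i j \<longleftrightarrow> j + 1 = i \<or> j = i \<or> j = i + 1"

lemma near_sym: "near i j \<longleftrightarrow> near j i"
  by (auto simp: near_def)

text \<open>\<open>leading i w\<close>: the letter \<open>i\<close> can be commuted to the front of \<open>w\<close>.\<close>

fun leading :: "nat \<Rightarrow> nat list \<Rightarrow> bool" where
  "leading i [] = False"
| "leading i (x # w) \<longleftrightarrow> x = i \<or> \<not> near i x \<and> leading i w"

definition trailing :: "nat \<Rightarrow> nat list \<Rightarrow> bool" where
  "trailing i w = leading i (rev w)"

fun reduced :: "nat list \<Rightarrow> bool" where
  "reduced [] = True"
| "reduced (x # w) \<longleftrightarrow> reduced w \<and> \<not> leading x w"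

definition cons_reduce :: "nat \<Rightarrow> nat list \<Rightarrow> nat list" where
  "cons_reduce i w = (if leading i w then remove1 i w else i # w)"

definition reduce :: "nat list \<Rightarrow> nat list" where
  "reduce w = foldr cons_reduce w []"

text \<open>The letter \<open>i\<close> exchanges the strands \<open>i\<close> and \<open>i + 1\<close>, so \<open>strand w c\<close> lists the
  letters of \<open>w\<close> acting on strand \<open>c\<close>, and \<open>heap w\<close> is the heap of pieces of \<open>w\<close>, built from
  the right.\<close>

definition strand :: "nat list \<Rightarrow> nat \<Rightarrow> nat list" where
  "strand w c = filter (\<lambda>x. x + 1 = c \<or> x = c) w"

definition heap_act :: "nat \<Rightarrow> (nat \<Rightarrow> nat list) \<Rightarrow> nat \<Rightarrow> nat list" where
  "heap_act i H = (if (\<exists>t. H i = i # t) \<and> (\<exists>t. H (Suc i) = i # t)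
     then H(i := tl (H i), Suc i := tl (H (Suc i)))
     else H(i := i # H i, Suc i := i # H (Suc i)))"

definition heap :: "nat list \<Rightarrow> nat \<Rightarrow> nat list" where
  "heap w = foldr heap_act w (\<lambda>_. [])"

lemma leading_append:
  "leading i (u @ v) \<longleftrightarrow> leading i u \<or> (\<forall>x\<in>set u. \<not> near i x) \<and> leading i v"
  by (induction u) (auto simp: near_def)

lemma leading_far_append: "\<forall>x\<in>set u. \<not> near i x \<Longrightarrow> leading i (u @ v) \<longleftrightarrow> leading i v"
  by (induction u) (auto simp: near_def)

lemma leading_split:
  assumes "leading i w"
  obtains u v where "w = u @ i # v" "\<forall>x\<in>set u. \<not> near i x"
proof -
  have "\<exists>u v. w = u @ i # v \<and> (\<forall>x\<in>set u. \<not> near i x)"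
    using assms
  proof (induction w)
    case (Cons x w)
    show ?case
    proof (cases "x = i")
      case True
      then show ?thesis by (intro exI[of _ "[]"] exI[of _ w]) auto
    next
      case False
      with Cons obtain u v where "w = u @ i # v" "\<forall>y\<in>set u. \<not> near i y" "\<not> near i x"
        by auto
      then show ?thesis by (intro exI[of _ "x # u"] exI[of _ v]) auto
    qed
  qed simp
  with that show ?thesis by blast
qed

lemma trailing_split:
  assumes "trailing i w"
  obtains u v where "w = u @ i # v" "\<forall>x\<in>set v. \<not> near i x"
proof -
  obtain u v where uv: "rev w = u @ i # v" "\<forall>x\<in>set u. \<not> near i x"
    using assms leading_split unfolding trailing_def by blast
  have "w = rev v @ i # rev u"
    using arg_cong[OF uv(1), of rev] by simp
  with uv(2) that show ?thesis by simp
qed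

lemma leading_not_Suc: "\<not> (leading i w \<and> leading (Suc i) w)"
  by (induction w) (auto simp: near_def)

lemma trailing_not_Suc: "\<not> (trailing i w \<and> trailing (Suc i) w)"
  unfolding trailing_def by (rule leading_not_Suc)

lemma leading_iff_strand:
  "leading i w \<longleftrightarrow> (\<exists>t. strand w i = i # t) \<and> (\<exists>t. strand w (Suc i) = i # t)"
  by (induction w) (auto simp: strand_def near_def)

lemma strand_append: "strand (u @ v) c = strand u c @ strand v c"
  by (simp add: strand_def)

lemma strand_Cons: "strand (x # w) c = (if x + 1 = c \<or> x = c then x # strand w c else strand w c)"
  by (simp add: strand_def)

lemma strand_eq_Nil: "\<forall>x\<in>set u. \<not> near i x \<Longrightarrow> c = i \<or> c = Suc i \<Longrightarrow> strand u c = []"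
  by (induction u) (auto simp: strand_def near_def)

lemma remove1_split: "\<forall>x\<in>set u. \<not> near i x \<Longrightarrow> remove1 i (u @ i # v) = u @ v"
  by (induction u) (auto simp: near_def)

lemma strand_cons_reduce: "strand (cons_reduce i w) = heap_act i (strand w)"
proof (cases "leading i w")
  case True
  then obtain u v where w: "w = u @ i # v" and u: "\<forall>x\<in>set u. \<not> near i x"
    by (rule leading_split)
  have "strand (u @ v) = (strand w)(i := tl (strand w i), Suc i := tl (strand w (Suc i)))"
  proof
    fix c
    show "strand (u @ v) c = ((strand w)(i := tl (strand w i), Suc i := tl (strand w (Suc i)))) c"
      using strand_eq_Nil[OF u, of c] strand_eq_Nil[OF u, of i] strand_eq_Nil[OF u, of "Suc i"] w
      by (auto simp: strand_append strand_Cons)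
  qed
  moreover have "remove1 i w = u @ v"
    using w remove1_split[OF u] by simp
  ultimately show ?thesis
    using True leading_iff_strand[of i w] by (simp add: cons_reduce_def heap_act_def)
next
  case False
  then show ?thesis
    using leading_iff_strand[of i w]
    by (auto simp: cons_reduce_def heap_act_def strand_Cons fun_eq_iff)
qed

lemma reduced_remove:
  "\<forall>x\<in>set u. \<not> near i x \<Longrightarrow> reduced (u @ i # v) \<Longrightarrow> reduced (u @ v)"
proof (induction u)
  case Nil
  then show ?case by simp
next
  case (Cons x u)
  then have "\<not> near x i" using near_sym by auto
  then show ?case using Cons by (auto simp: leading_append near_def)
qed

lemma reduced_cons_reduce: "reduced w \<Longrightarrow> reduced (cons_reduce i w)"
proof (cases "leading i w")
  case True
  assume "reduced w"
  obtain u v where "w = u @ i # v" "\<forall>x\<in>set u. \<not> near i x"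
    using True by (rule leading_split)
  then show ?thesis
    using True \<open>reduced w\<close> reduced_remove by (simp add: cons_reduce_def remove1_split)
qed (simp add: cons_reduce_def)

lemma reduced_reduce: "reduced (reduce w)"
  by (induction w) (simp_all add: reduce_def reduced_cons_reduce)

lemma strand_reduce: "strand (reduce w) = heap w"
  by (induction w) (simp_all add: reduce_def heap_def strand_cons_reduce, simp add: strand_def)

lemma reduce_reduced: "reduced w \<Longrightarrow> reduce w = w"
  by (induction w) (auto simp: reduce_def cons_reduce_def)

lemma heap_reduced: "reduced w \<Longrightarrow> heap w = strand w"
  using strand_reduce[of w] by (simp add: reduce_reduced)

lemma heap_act_involutive_strand:
  assumes "reduced w"
  shows "heap_act i (heap_act i (strand w)) = strand w"
proof (cases "leading i w")
  case True
  then obtain u v where w: "w = u @ i # v" and u: "\<forall>x\<in>set u. \<not> near i x"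
    by (rule leading_split)
  have "reduced (i # v)" using assms w by (induction u arbitrary: w) auto
  then have "\<not> leading i (u @ v)" using u by (simp add: leading_far_append)
  then have "cons_reduce i (cons_reduce i w) = i # u @ v"
    using True by (simp add: cons_reduce_def w remove1_split[OF u])
  moreover have "strand (i # u @ v) = strand w"
    using strand_eq_Nil[OF u] by (auto simp: fun_eq_iff w strand_Cons strand_append)
  ultimately show ?thesis by (metis strand_cons_reduce)
next
  case False
  then have "cons_reduce i (cons_reduce i w) = w" by (simp add: cons_reduce_def)
  then show ?thesis by (metis strand_cons_reduce)
qed

lemma heap_act_commute: "\<not> near i j \<Longrightarrow> heap_act i (heap_act j H) = heap_act j (heap_act i H)"
  unfolding heap_act_def near_def by (auto simp: fun_eq_iff fun_upd_def)

lemma heap_Cons: "heap (x # w) = heap_act x (heap w)"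
  by (simp add: heap_def)

lemma heap_append: "heap (u @ v) = foldr heap_act u (heap v)"
  by (simp add: heap_def)

lemma heap_act_involutive: "heap_act i (heap_act i (heap w)) = heap w"
  using heap_act_involutive_strand[OF reduced_reduce[of w]] by (simp add: strand_reduce)

lemma heap_fb_step: "fb_step k a b \<Longrightarrow> heap a = heap b"
proof (induction rule: fb_step.induct)
  case (cancel i xs ys)
  then show ?case by (simp add: heap_append heap_Cons heap_act_involutive)
next
  case (commute i j xs ys)
  then have "\<not> near i j" by (auto simp: near_def)
  then show ?case by (simp add: heap_append heap_Cons heap_act_commute[of i j])
qed

lemma count_heap_act_le:
  "count_list (heap_act x H z) z \<le> count_list (H z) z + (if x = z then 1 else 0)"
proof -
  have "count_list (tl l) z \<le> count_list l z" for l
    by (cases l) auto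
  then show ?thesis by (auto simp: heap_act_def)
qed

lemma count_foldr_heap_act_le:
  "count_list (foldr heap_act u H z) z \<le> count_list (H z) z + count_list u z"
proof (induction u)
  case (Cons x u)
  then show ?case using count_heap_act_le[of x "foldr heap_act u H" z] by auto
qed simp

lemma count_strand: "count_list (strand w z) z = count_list w z"
  by (induction w) (auto simp: strand_def)

lemma heap_act_foldr_commute:
  "\<forall>y\<in>set u. \<not> near z y \<Longrightarrow> heap_act z (foldr heap_act u H) = foldr heap_act u (heap_act z H)"
proof (induction u)
  case (Cons y u)
  then show ?case by (simp add: heap_act_commute[of z y])
qed simp

lemma count_heap_cancel:
  assumes "reduced v" "trailing z u" "leading z v"
  shows "count_list (heap (u @ v) z) z + 2 \<le> count_list u z + count_list v z"
proof -
  obtain p q where u: "u = p @ z # q" and q: "\<forall>y\<in>set q. \<not> near z y"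
    using assms(2) by (rule trailing_split)
  have "heap (u @ v) = foldr heap_act p (foldr heap_act q (heap_act z (strand v)))"
    using heap_act_foldr_commute[OF q] heap_reduced[OF assms(1)]
    by (simp add: u heap_append heap_Cons)
  then have "count_list (heap (u @ v) z) z
      \<le> count_list (heap_act z (strand v) z) z + count_list q z + count_list p z"
    using count_foldr_heap_act_le[of p _ z] count_foldr_heap_act_le[of q _ z]
    by (metis add_le_mono1 le_trans)
  moreover have "count_list (heap_act z (strand v) z) z + 1 = count_list v z"
    using assms(3) leading_iff_strand[of z v] count_strand[of v z] by (auto simp: heap_act_def)
  ultimately show ?thesis by (simp add: u)
qed

lemma trailing_append:
  "trailing i (u @ v) \<longleftrightarrow> trailing i v \<or> (\<forall>x\<in>set v. \<not> near i x) \<and> trailing i u"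
  by (simp add: trailing_def leading_append)

lemma reduced_append:
  "reduced u \<Longrightarrow> reduced v \<Longrightarrow> (\<forall>x. trailing x u \<longrightarrow> \<not> leading x v) \<Longrightarrow> reduced (u @ v)"
proof (induction u)
  case (Cons x u)
  have "trailing y u \<Longrightarrow> trailing y (x # u)" for y
    by (simp add: trailing_def leading_append)
  then have "reduced (u @ v)" using Cons by auto
  moreover have "(\<forall>y\<in>set u. \<not> near x y) \<Longrightarrow> trailing x (x # u)"
    using trailing_append[of x "[x]" u] by (simp add: trailing_def)
  then have "\<not> leading x (u @ v)" using Cons.prems by (auto simp: leading_append)
  ultimately show ?case by simp
qed simp

section \<open>Equivalent words\<close>

definition fb_conv :: "nat \<Rightarrow> (nat list \<times> nat list) set" where
  "fb_conv k = ({(x, y). fb_step k x y} \<union> {(x, y). fb_step k y x})\<^sup>*"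

lemma fb_rel_conv: "fb_rel k = {(u, v). u \<in> fb_words k \<and> v \<in> fb_words k \<and> (u, v) \<in> fb_conv k}"
  by (simp add: fb_rel_def fb_conv_def)

lemma fb_conv_refl [simp]: "(w, w) \<in> fb_conv k"
  by (simp add: fb_conv_def)

lemma fb_conv_trans: "(u, v) \<in> fb_conv k \<Longrightarrow> (v, w) \<in> fb_conv k \<Longrightarrow> (u, w) \<in> fb_conv k"
  unfolding fb_conv_def by (rule rtrancl_trans)

lemma fb_conv_sym: "(u, v) \<in> fb_conv k \<Longrightarrow> (v, u) \<in> fb_conv k"
  unfolding fb_conv_def by (rule symD[OF sym_rtrancl]) (auto simp: sym_def)

lemma fb_step_conv: "fb_step k u v \<Longrightarrow> (u, v) \<in> fb_conv k"
  by (auto simp: fb_conv_def)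

lemma fb_step_append: "fb_step k u v \<Longrightarrow> fb_step k (p @ u @ q) (p @ v @ q)"
proof (induction rule: fb_step.induct)
  case (cancel i xs ys)
  then show ?case using fb_step.cancel[of i k "p @ xs" "ys @ q"] by simp
next
  case (commute i j xs ys)
  then show ?case using fb_step.commute[of i k j "p @ xs" "ys @ q"] by simp
qed

lemma fb_conv_append: "(u, v) \<in> fb_conv k \<Longrightarrow> (p @ u @ q, p @ v @ q) \<in> fb_conv k"
  unfolding fb_conv_def
proof (induction rule: rtrancl_induct)
  case (step v w)
  then have "(p @ v @ q, p @ w @ q) \<in> {(x, y). fb_step k x y} \<union> {(x, y). fb_step k y x}"
    using fb_step_append by blast
  with step.IH show ?case by (rule rtrancl_into_rtrancl)
qed simp

lemma fb_conv_invariant: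
  assumes "\<And>u v. fb_step k u v \<Longrightarrow> f u = f v" and "(u, v) \<in> fb_conv k"
  shows "f u = f v"
  using assms(2) unfolding fb_conv_def
  by (induction rule: rtrancl_induct) (auto dest: assms(1))

lemma heap_fb_conv: "(u, v) \<in> fb_conv k \<Longrightarrow> heap u = heap v"
  using fb_conv_invariant heap_fb_step by metis

lemma fb_conv_commute_far:
  assumes "x \<in> {1..<k}" "set u \<subseteq> {1..<k}" "\<forall>y\<in>set u. \<not> near x y"
  shows "(x # u @ v, u @ x # v) \<in> fb_conv k"
  using assms(2,3)
proof (induction u)
  case (Cons y u)
  then have "y \<in> {1..<k}" "x + 2 \<le> y \<or> y + 2 \<le> x" by (auto simp: near_def)
  then have "(x # y # u @ v, y # x # u @ v) \<in> fb_conv k"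
    using fb_step.commute[OF assms(1), of y "[]" "u @ v"] by (simp add: fb_step_conv)
  moreover have "(y # x # u @ v, y # u @ x # v) \<in> fb_conv k"
    using fb_conv_append[OF Cons.IH, of "[y]" "[]"] Cons.prems by simp
  ultimately show ?case by (simp add: fb_conv_trans)
qed simp

lemma set_reduce: "set (reduce w) \<subseteq> set w"
proof (induction w)
  case (Cons x w)
  have "set (cons_reduce x (reduce w)) \<subseteq> insert x (set (reduce w))"
    by (auto simp: cons_reduce_def dest: in_set_remove1[THEN iffD1, rotated]
        intro: notin_set_remove1)
  with Cons show ?case by (auto simp: reduce_def)
qed (simp add: reduce_def)

lemma fb_conv_reduce: "set w \<subseteq> {1..<k} \<Longrightarrow> (w, reduce w) \<in> fb_conv k"
proof (induction w)
  case (Cons x w)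
  then have x: "x \<in> {1..<k}" and r: "set (reduce w) \<subseteq> {1..<k}"
    using set_reduce[of w] by auto
  have conv: "(x # w, x # reduce w) \<in> fb_conv k"
    using fb_conv_append[OF Cons.IH, of "[x]" "[]"] Cons.prems by simp
  show ?case
  proof (cases "leading x (reduce w)")
    case True
    then obtain u v where uv: "reduce w = u @ x # v" and u: "\<forall>y\<in>set u. \<not> near x y"
      by (rule leading_split)
    have "(x # u @ x # v, u @ [x, x] @ v) \<in> fb_conv k"
      using fb_conv_commute_far[OF x _ u] r uv by simp
    moreover have "(u @ [x, x] @ v, u @ v) \<in> fb_conv k"
      using fb_step.cancel[OF x] by (rule fb_step_conv)
    ultimately show ?thesis
      using conv True uv remove1_split[OF u]
      by (simp add: reduce_def cons_reduce_def) (meson fb_conv_trans)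
  qed (use conv in \<open>simp add: reduce_def cons_reduce_def\<close>)
qed (simp add: reduce_def)

lemma fb_conv_rev_cancel: "set u \<subseteq> {1..<k} \<Longrightarrow> (rev u @ u, []) \<in> fb_conv k"
proof (induction u)
  case (Cons x u)
  then have "(rev (x # u) @ x # u, rev u @ u) \<in> fb_conv k" "(rev u @ u, []) \<in> fb_conv k"
    using fb_step_conv[OF fb_step.cancel[of x k "rev u" u]] by simp_all
  then show ?case by (rule fb_conv_trans)
qed simp

section \<open>Framed words\<close>

definition framed :: "nat \<Rightarrow> nat \<Rightarrow> nat list \<Rightarrow> bool" where
  "framed a b y \<longleftrightarrow> reduced y \<and> (\<forall>x. leading x y \<longleftrightarrow> x = a) \<and> (\<forall>x. trailing x y \<longleftrightarrow> x = b) \<and> a \<noteq> b"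

lemma framedI:
  assumes "reduced y" "leading a y" "\<And>x. leading x y \<Longrightarrow> x = a"
    and "trailing b y" "\<And>x. trailing x y \<Longrightarrow> x = b" "a \<noteq> b"
  shows "framed a b y"
  using assms unfolding framed_def by blast

lemma framed_append:
  assumes y: "framed a b y" and z: "framed a b z"
  shows "framed a b (y @ z)"
proof (rule framedI)
  show "reduced (y @ z)" using y z by (auto simp: framed_def intro!: reduced_append)
  show "leading a (y @ z)" "trailing b (y @ z)" "a \<noteq> b"
    using y z by (auto simp: framed_def leading_append trailing_append)
  show "leading x (y @ z) \<Longrightarrow> x = a" "trailing x (y @ z) \<Longrightarrow> x = b" for x
    using y z by (auto simp: framed_def leading_append trailing_append)
qed

definition word_pow :: "nat list \<Rightarrow> nat \<Rightarrow> nat list" where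
  "word_pow y n = concat (replicate n y)"

lemma word_pow_Suc: "word_pow y (Suc n) = y @ word_pow y n"
  by (simp add: word_pow_def)

lemma word_pow_Suc_right: "word_pow y (Suc n) = word_pow y n @ y"
  by (induction n) (auto simp: word_pow_def)

lemma set_word_pow: "set y \<subseteq> A \<Longrightarrow> set (word_pow y n) \<subseteq> A"
  by (auto simp: word_pow_def)

lemma framed_word_pow: "framed a b y \<Longrightarrow> 0 < n \<Longrightarrow> framed a b (word_pow y n)"
proof (induction n)
  case (Suc n)
  then show ?case by (cases n) (auto simp: word_pow_Suc word_pow_def framed_append)
qed simp

definition separating :: "nat list \<Rightarrow> nat list \<Rightarrow> bool" where
  "separating y r \<longleftrightarrow> (\<exists>a b. framed a b y \<and>
     (leading b r \<and> \<not> trailing a r \<or> trailing a r \<and> \<not> leading b r))"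

lemma separating_word_pow: "separating y r \<Longrightarrow> 0 < n \<Longrightarrow> separating (word_pow y n) r"
  unfolding separating_def using framed_word_pow by blast

text \<open>Exactly one of \<open>r @ y\<close> and \<open>y @ r\<close> is reduced; in the other two letters cancel.\<close>

lemma heap_append_separating_neq:
  assumes r: "reduced r" and "separating y r"
  shows "heap (r @ y) \<noteq> heap (y @ r)"
proof -
  obtain a b where y: "framed a b y"
    and ab: "leading b r \<and> \<not> trailing a r \<or> trailing a r \<and> \<not> leading b r"
    using assms(2) by (auto simp: separating_def)
  from ab show ?thesis
  proof (elim disjE conjE)
    assume "leading b r" "\<not> trailing a r"
    then have "reduced (r @ y)" using r y by (auto simp: framed_def intro!: reduced_append)
    then have "count_list (heap (r @ y) b) b = count_list r b + count_list y b"
      by (simp add: heap_reduced count_strand)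
    moreover have "count_list (heap (y @ r) b) b + 2 \<le> count_list y b + count_list r b"
      using count_heap_cancel r y \<open>leading b r\<close> by (auto simp: framed_def)
    ultimately show ?thesis by (auto dest: fun_cong)
  next
    assume "trailing a r" "\<not> leading b r"
    then have "reduced (y @ r)" using r y by (auto simp: framed_def intro!: reduced_append)
    then have "count_list (heap (y @ r) a) a = count_list y a + count_list r a"
      by (simp add: heap_reduced count_strand)
    moreover have "count_list (heap (r @ y) a) a + 2 \<le> count_list r a + count_list y a"
      using count_heap_cancel y \<open>trailing a r\<close> by (auto simp: framed_def)
    ultimately show ?thesis by (auto dest: fun_cong)
  qed
qed

lemma framed_ascending:
  "framed a (Suc a) (word_pow [a, Suc a] 3)"
  "framed a (Suc (Suc a)) (word_pow [a, Suc a, Suc (Suc a)] 4)"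
  by (rule framedI; auto simp: word_pow_def numeral_eq_Suc trailing_def near_def)+

lemma framed_descending:
  "framed (Suc a) a (word_pow [Suc a, a] 3)"
  "framed (Suc (Suc a)) a (word_pow [Suc (Suc a), Suc a, a] 4)"
  by (rule framedI; auto simp: word_pow_def numeral_eq_Suc trailing_def near_def)+

lemma separating_leadingI: "framed a b y \<Longrightarrow> leading b r \<Longrightarrow> \<not> trailing a r \<Longrightarrow> separating y r"
  unfolding separating_def by blast

lemma separating_trailingI: "framed a b y \<Longrightarrow> trailing a r \<Longrightarrow> \<not> leading b r \<Longrightarrow> separating y r"
  unfolding separating_def by blast

lemma word_perm_ascending:
  "word_perm (word_pow [a, Suc a] 3) = id"
  "word_perm (word_pow [a, Suc a, Suc (Suc a)] 4) = id"
proof -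
  have "word_perm (word_pow [a, Suc a] 3) x = x \<and>
      word_perm (word_pow [a, Suc a, Suc (Suc a)] 4) x = x" for x
  proof -
    consider "x = a" | "x = Suc a" | "x = Suc (Suc a)" | "x = Suc (Suc (Suc a))"
      | "x \<notin> {a, Suc a, Suc (Suc a), Suc (Suc (Suc a))}" by blast
    then show ?thesis by cases (simp_all add: word_pow_def numeral_eq_Suc)
  qed
  then show "word_perm (word_pow [a, Suc a] 3) = id"
    "word_perm (word_pow [a, Suc a, Suc (Suc a)] 4) = id" by auto
qed

lemma word_perm_descending:
  "word_perm (word_pow [Suc a, a] 3) = id"
  "word_perm (word_pow [Suc (Suc a), Suc a, a] 4) = id"
proof -
  have "word_perm (word_pow [Suc a, a] 3) x = x \<and>
      word_perm (word_pow [Suc (Suc a), Suc a, a] 4) x = x" for x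
  proof -
    consider "x = a" | "x = Suc a" | "x = Suc (Suc a)" | "x = Suc (Suc (Suc a))"
      | "x \<notin> {a, Suc a, Suc (Suc a), Suc (Suc (Suc a))}" by blast
    then show ?thesis by cases (simp_all add: word_pow_def numeral_eq_Suc)
  qed
  then show "word_perm (word_pow [Suc a, a] 3) = id"
    "word_perm (word_pow [Suc (Suc a), Suc a, a] 4) = id" by auto
qed

lemma pure_separating_word_below:
  assumes "leading (Suc (Suc c)) r"
  obtains y where "set y \<subseteq> {c..Suc (Suc c)}" "word_perm y = id" "separating y r"
proof (cases "trailing (Suc c) r")
  case False
  show ?thesis
    by (rule that[OF set_word_pow word_perm_ascending(1)
          separating_leadingI[OF framed_ascending(1) assms False]]) auto
next
  case True
  then have "\<not> trailing c r" using trailing_not_Suc by blast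
  show ?thesis
    by (rule that[OF set_word_pow word_perm_ascending(2)
          separating_leadingI[OF framed_ascending(2) assms \<open>\<not> trailing c r\<close>]]) auto
qed

lemma pure_separating_word_above:
  assumes "leading b r"
  obtains y where "set y \<subseteq> {b..Suc (Suc b)}" "word_perm y = id" "separating y r"
proof (cases "trailing (Suc b) r")
  case False
  show ?thesis
    by (rule that[OF set_word_pow word_perm_descending(1)
          separating_leadingI[OF framed_descending(1) assms False]]) auto
next
  case True
  then have "\<not> trailing (Suc (Suc b)) r" using trailing_not_Suc by blast
  show ?thesis
    by (rule that[OF set_word_pow word_perm_descending(2)
          separating_leadingI[OF framed_descending(2) assms \<open>\<not> trailing (Suc (Suc b)) r\<close>]]) auto
qed

lemma pure_separating_word_middle:
  assumes "leading (Suc a) r"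
  obtains y where "set y \<subseteq> {a..Suc (Suc a)}" "word_perm y = id" "separating y r"
proof -
  consider "\<not> trailing a r" | "\<not> trailing (Suc (Suc a)) r"
    | "trailing a r" "\<not> leading (Suc (Suc a)) r"
    using assms leading_not_Suc by blast
  then show ?thesis
  proof cases
    case 1
    show ?thesis
      by (rule that[OF set_word_pow word_perm_ascending(1)
            separating_leadingI[OF framed_ascending(1) assms 1]]) auto
  next
    case 2
    show ?thesis
      by (rule that[OF set_word_pow word_perm_descending(1)
            separating_leadingI[OF framed_descending(1) assms 2]]) auto
  next
    case 3
    show ?thesis
      by (rule that[OF set_word_pow word_perm_ascending(2)
            separating_trailingI[OF framed_ascending(2) 3]]) auto
  qed
qed

lemma pure_separating_word_exists:
  assumes "4 \<le> k" "leading b r" "b \<in> {1..<k}"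
  obtains y where "set y \<subseteq> {1..<k}" "word_perm y = id" "separating y r"
proof -
  have "b = 1 \<or> b = 2 \<or> 3 \<le> b"
    using assms(3) by auto
  then consider "b = 1" | "b = 2" | "3 \<le> b"
    by blast
  then show ?thesis
  proof cases
    case 1
    then obtain y where "set y \<subseteq> {1..3}" "word_perm y = id" "separating y r"
      using pure_separating_word_above[of 1 r] assms(2) by (auto simp: numeral_eq_Suc)
    moreover have "{1..3} \<subseteq> {1..<k}" using assms(1) by auto
    ultimately show ?thesis by (meson that subset_trans)
  next
    case 2
    then obtain y where "set y \<subseteq> {1..3}" "word_perm y = id" "separating y r"
      using pure_separating_word_middle[of 1 r] assms(2) by (auto simp: numeral_eq_Suc)
    moreover have "{1..3} \<subseteq> {1..<k}" using assms(1) by auto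
    ultimately show ?thesis by (meson that subset_trans)
  next
    case 3
    define c where "c = b - 2"
    have c: "b = Suc (Suc c)" "1 \<le> c"
      using 3 by (simp_all add: c_def)
    obtain y where "set y \<subseteq> {c..b}" "word_perm y = id" "separating y r"
      using pure_separating_word_below[of c r] assms(2) c(1) by blast
    moreover have "{c..b} \<subseteq> {1..<k}" using assms(3) c by auto
    ultimately show ?thesis by (meson that subset_trans)
  qed
qed

lemma nontrivial_word_has_noncommuting_pure_word:
  assumes "4 \<le> k" "set w \<subseteq> {1..<k}" "(w, []) \<notin> fb_conv k"
  obtains y where "set y \<subseteq> {1..<k}" "word_perm y = id"
    "\<And>n. 0 < n \<Longrightarrow> (w @ word_pow y n, word_pow y n @ w) \<notin> fb_conv k"
proof -
  have w_r: "(w, reduce w) \<in> fb_conv k"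
    using fb_conv_reduce[OF assms(2)] .
  obtain b t where r: "reduce w = b # t"
    using w_r assms(3) by (cases "reduce w") auto
  have "b \<in> {1..<k}" using set_reduce[of w] assms(2) r by auto
  then obtain y where y: "set y \<subseteq> {1..<k}" "word_perm y = id" "separating y (reduce w)"
    using pure_separating_word_exists[OF assms(1), of b "reduce w"] r by auto
  have "(w @ word_pow y n, word_pow y n @ w) \<notin> fb_conv k" if "0 < n" for n
  proof
    let ?Y = "word_pow y n"
    assume "(w @ ?Y, ?Y @ w) \<in> fb_conv k"
    moreover have "(reduce w @ ?Y, w @ ?Y) \<in> fb_conv k"
      using fb_conv_append[OF fb_conv_sym[OF w_r], of "[]" ?Y] by simp
    moreover have "(?Y @ w, ?Y @ reduce w) \<in> fb_conv k"
      using fb_conv_append[OF w_r, of ?Y "[]"] by simp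
    ultimately have "heap (reduce w @ ?Y) = heap (?Y @ reduce w)"
      by (meson fb_conv_trans heap_fb_conv)
    then show False
      using heap_append_separating_neq[OF reduced_reduce separating_word_pow[OF y(3) that]] by blast
  qed
  with y that show ?thesis by blast
qed

section \<open>The groups FB_k and PFB_k\<close>

abbreviation fb_class :: "nat \<Rightarrow> nat list \<Rightarrow> nat list set" where
  "fb_class k w \<equiv> fb_rel k `` {w}"

lemma fb_words_append [simp]: "u \<in> fb_words k \<Longrightarrow> v \<in> fb_words k \<Longrightarrow> u @ v \<in> fb_words k"
  by (simp add: fb_words_def)

lemma fb_words_rev [simp]: "rev u \<in> fb_words k \<longleftrightarrow> u \<in> fb_words k"
  by (simp add: fb_words_def)

lemma Nil_in_fb_words [simp]: "[] \<in> fb_words k"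
  by (simp add: fb_words_def)

lemma equiv_fb_rel: "equiv (fb_words k) (fb_rel k)"
proof (rule equivI)
  show "refl_on (fb_words k) (fb_rel k)"
    unfolding refl_on_def fb_rel_conv by auto
  show "sym (fb_rel k)"
    unfolding sym_def fb_rel_conv using fb_conv_sym by blast
  show "trans (fb_rel k)"
    unfolding trans_def fb_rel_conv using fb_conv_trans by blast
qed (auto simp: fb_rel_conv)

lemma fb_class_eq_iff:
  assumes "u \<in> fb_words k" "v \<in> fb_words k"
  shows "fb_class k u = fb_class k v \<longleftrightarrow> (u, v) \<in> fb_conv k"
proof -
  have "fb_class k u = fb_class k v \<longleftrightarrow> (u, v) \<in> fb_rel k"
    using eq_equiv_class_iff[OF equiv_fb_rel] assms by blast
  also have "\<dots> \<longleftrightarrow> (u, v) \<in> fb_conv k"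
    using assms by (simp add: fb_rel_conv)
  finally show ?thesis .
qed

lemma FB_carrier: "carrier (FB k) = fb_words k // fb_rel k"
  by (simp add: FB_def)

lemma fb_class_in_carrier: "u \<in> fb_words k \<Longrightarrow> fb_class k u \<in> carrier (FB k)"
  by (simp add: FB_carrier quotientI)

lemma FB_carrier_iff: "X \<in> carrier (FB k) \<longleftrightarrow> (\<exists>u\<in>fb_words k. X = fb_class k u)"
  by (simp add: FB_carrier quotient_def)

lemma FB_mult_class:
  assumes "u \<in> fb_words k" "v \<in> fb_words k"
  shows "fb_class k u \<otimes>\<^bsub>FB k\<^esub> fb_class k v = fb_class k (u @ v)"
proof -
  have class_eq: "fb_class k (a @ b) = fb_class k (u @ v)"
    if "a \<in> fb_class k u" "b \<in> fb_class k v" for a b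
  proof -
    have "(u, a) \<in> fb_conv k" "(v, b) \<in> fb_conv k" and ab: "a \<in> fb_words k" "b \<in> fb_words k"
      using that by (auto simp: fb_rel_conv)
    then have "(u @ v, a @ v) \<in> fb_conv k" "(a @ v, a @ b) \<in> fb_conv k"
      using fb_conv_append[of u a k "[]" v] fb_conv_append[of v b k a "[]"] by simp_all
    then have "(u @ v, a @ b) \<in> fb_conv k" by (rule fb_conv_trans)
    then have "fb_class k (u @ v) = fb_class k (a @ b)"
      using assms ab by (intro fb_class_eq_iff[THEN iffD2]) auto
    then show ?thesis by (rule sym)
  qed
  have "u \<in> fb_class k u" "v \<in> fb_class k v"
    using assms by (auto simp: fb_rel_conv)
  then have "(\<Union>a\<in>fb_class k u. \<Union>b\<in>fb_class k v. fb_class k (a @ b)) = fb_class k (u @ v)"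
    using class_eq by blast
  then show ?thesis by (simp add: FB_def)
qed

lemma FB_one: "\<one>\<^bsub>FB k\<^esub> = fb_class k []"
  by (simp add: FB_def)

lemma FB_inv_class:
  assumes "u \<in> fb_words k"
  shows "fb_class k (rev u) \<otimes>\<^bsub>FB k\<^esub> fb_class k u = \<one>\<^bsub>FB k\<^esub>"
proof -
  have "(rev u @ u, []) \<in> fb_conv k"
    using assms fb_conv_rev_cancel unfolding fb_words_def by blast
  then have "fb_class k (rev u @ u) = fb_class k []"
    using assms by (intro fb_class_eq_iff[THEN iffD2]) auto
  moreover have "fb_class k (rev u) \<otimes>\<^bsub>FB k\<^esub> fb_class k u = fb_class k (rev u @ u)"
    using assms by (intro FB_mult_class) auto
  ultimately show ?thesis by (simp only: FB_one)
qed

lemma group_FB: "group (FB k)"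
proof (rule groupI)
  fix X Y
  assume "X \<in> carrier (FB k)" "Y \<in> carrier (FB k)"
  then obtain u v where "u \<in> fb_words k" "v \<in> fb_words k" "X = fb_class k u" "Y = fb_class k v"
    unfolding FB_carrier_iff by blast
  then show "X \<otimes>\<^bsub>FB k\<^esub> Y \<in> carrier (FB k)"
    by (simp add: FB_mult_class fb_class_in_carrier)
next
  fix X Y Z
  assume "X \<in> carrier (FB k)" "Y \<in> carrier (FB k)" "Z \<in> carrier (FB k)"
  then obtain u v w where "u \<in> fb_words k" "v \<in> fb_words k" "w \<in> fb_words k"
    "X = fb_class k u" "Y = fb_class k v" "Z = fb_class k w"
    unfolding FB_carrier_iff by blast
  then show "X \<otimes>\<^bsub>FB k\<^esub> Y \<otimes>\<^bsub>FB k\<^esub> Z = X \<otimes>\<^bsub>FB k\<^esub> (Y \<otimes>\<^bsub>FB k\<^esub> Z)"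
    by (simp add: FB_mult_class)
next
  show "\<one>\<^bsub>FB k\<^esub> \<in> carrier (FB k)"
    unfolding FB_one by (simp add: fb_class_in_carrier)
next
  fix X
  assume "X \<in> carrier (FB k)"
  then obtain u where u: "u \<in> fb_words k" "X = fb_class k u"
    unfolding FB_carrier_iff by blast
  then show "\<one>\<^bsub>FB k\<^esub> \<otimes>\<^bsub>FB k\<^esub> X = X"
    unfolding FB_one by (simp add: FB_mult_class)
  show "\<exists>Y\<in>carrier (FB k). Y \<otimes>\<^bsub>FB k\<^esub> X = \<one>\<^bsub>FB k\<^esub>"
    using FB_inv_class[OF u(1)] fb_class_in_carrier[of "rev u" k] u by auto
qed

lemma FB_nat_pow_class:
  assumes "y \<in> fb_words k"
  shows "fb_class k y [^]\<^bsub>FB k\<^esub> (n::nat) = fb_class k (word_pow y n)"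
proof (induction n)
  case 0
  then show ?case by (simp add: FB_one word_pow_def)
next
  case (Suc n)
  have "word_pow y n \<in> fb_words k"
    using set_word_pow assms unfolding fb_words_def by blast
  with Suc assms show ?case
    by (simp add: group.is_monoid[OF group_FB] monoid.nat_pow_Suc FB_mult_class word_pow_Suc_right)
qed

lemma word_perm_append: "word_perm (u @ v) = word_perm u \<circ> word_perm v"
  by (induction u) auto

lemma word_perm_fb_step: "fb_step k u v \<Longrightarrow> word_perm u = word_perm v"
proof (induction rule: fb_step.induct)
  case (cancel i xs ys)
  then show ?case by (simp add: word_perm_append comp_assoc)
next
  case (commute i j xs ys)
  then have "transpose i (Suc i) (transpose j (Suc j) a) =
      transpose j (Suc j) (transpose i (Suc i) a)" for a
    by (auto simp: transpose_def)
  then show ?case by (simp add: word_perm_append comp_def)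
qed

lemma word_perm_fb_conv: "(u, v) \<in> fb_conv k \<Longrightarrow> word_perm u = word_perm v"
  using fb_conv_invariant word_perm_fb_step by metis

lemma fb_to_sym_class:
  assumes "u \<in> fb_words k"
  shows "fb_to_sym k (fb_class k u) = word_perm u"
proof -
  define v where "v = (SOME w. w \<in> fb_class k u)"
  have "u \<in> fb_class k u" using assms by (simp add: fb_rel_conv)
  then have "v \<in> fb_class k u" unfolding v_def by (rule someI)
  then have "(u, v) \<in> fb_conv k" by (simp add: fb_rel_conv)
  then have "word_perm u = word_perm v"
    by (rule word_perm_fb_conv)
  then show ?thesis by (simp add: fb_to_sym_def v_def)
qed

lemma PFB_carrier: "carrier (PFB k) = {X \<in> carrier (FB k). fb_to_sym k X = id}"
  by (simp add: PFB_def kernel_def sym_group_one)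

lemma subgroup_PFB: "subgroup (carrier (PFB k)) (FB k)"
proof (rule group.subgroupI[OF group_FB])
  show "carrier (PFB k) \<subseteq> carrier (FB k)" by (auto simp: PFB_carrier)
  show "carrier (PFB k) \<noteq> {}"
    using fb_class_in_carrier[of "[]" k] fb_to_sym_class[of "[]" k] by (auto simp: PFB_carrier)
next
  fix X
  assume "X \<in> carrier (PFB k)"
  then obtain u where u: "u \<in> fb_words k" "X = fb_class k u" "word_perm u = id"
    by (auto simp: PFB_carrier FB_carrier_iff fb_to_sym_class)
  have "rev u \<in> fb_words k" using u by simp
  then have "inv\<^bsub>FB k\<^esub> X = fb_class k (rev u)"
    using group.inv_equality[OF group_FB FB_inv_class] u fb_class_in_carrier by blast
  moreover have "(rev u @ u, []) \<in> fb_conv k"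
    using u(1) fb_conv_rev_cancel by (simp add: fb_words_def)
  then have "word_perm (rev u @ u) = word_perm []"
    by (rule word_perm_fb_conv)
  then have "word_perm (rev u) = id"
    using u(3) by (simp add: word_perm_append)
  ultimately show "inv\<^bsub>FB k\<^esub> X \<in> carrier (PFB k)"
    using \<open>rev u \<in> fb_words k\<close> by (simp add: PFB_carrier fb_class_in_carrier fb_to_sym_class)
next
  fix X Y
  assume "X \<in> carrier (PFB k)" "Y \<in> carrier (PFB k)"
  then obtain u v where "u \<in> fb_words k" "X = fb_class k u" "word_perm u = id"
    "v \<in> fb_words k" "Y = fb_class k v" "word_perm v = id"
    by (auto simp: PFB_carrier FB_carrier_iff fb_to_sym_class)
  then show "X \<otimes>\<^bsub>FB k\<^esub> Y \<in> carrier (PFB k)"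
    by (simp add: FB_mult_class PFB_carrier fb_class_in_carrier fb_to_sym_class word_perm_append)
qed

lemma group_PFB: "group (PFB k)"
  using group.subgroup_imp_group[OF group_FB subgroup_PFB] by (simp add: PFB_def)

section \<open>Virtual centres\<close>

lemma (in group) finite_index_subgroup_pow_mem:
  assumes H: "subgroup H G" and fin: "finite (rcosets H)" and x: "x \<in> carrier G"
  obtains n :: nat where "0 < n" "x [^] n \<in> H"
proof -
  define f where "f m = H #> x [^] m" for m :: nat
  have "range f \<subseteq> rcosets H"
    unfolding f_def using rcosetsI subgroup.subset[OF H] x by auto
  then have "finite (range f)"
    using fin finite_subset by blast
  then have "\<not> inj f"
    using finite_imageD[of f UNIV] by auto
  then obtain i j where ij: "i < j" "f i = f j"
    unfolding inj_def by (metis nat_neq_iff)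
  then have "x [^] j \<otimes> inv (x [^] i) \<in> H"
    using subgroup.rcos_module_imp[OF H is_group] repr_independenceD[OF H] x by (simp add: f_def)
  moreover have "x [^] j = x [^] (j - i) \<otimes> x [^] i"
    using nat_pow_mult[OF x, of "j - i" i] ij(1) by simp
  ultimately have "x [^] (j - i) \<in> H"
    using x by (simp add: m_assoc)
  with ij(1) show ?thesis by (intro that[of "j - i"]) auto
qed

lemma (in group) virtual_centre_trivialI:
  assumes "\<And>g. g \<in> carrier G \<Longrightarrow> g \<noteq> \<one> \<Longrightarrow>
    \<exists>x\<in>carrier G. \<forall>n::nat. 0 < n \<longrightarrow> g \<otimes> x [^] n \<noteq> x [^] n \<otimes> g"
  shows "virtual_centre G = {\<one>}"
proof
  show "virtual_centre G \<subseteq> {\<one>}"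
  proof
    fix g
    assume "g \<in> virtual_centre G"
    then obtain H where g: "g \<in> carrier G" and H: "subgroup H G" "finite (rcosets H)"
      and central: "\<forall>h\<in>H. g \<otimes> h = h \<otimes> g"
      unfolding virtual_centre_def by blast
    show "g \<in> {\<one>}"
    proof (rule ccontr)
      assume "g \<notin> {\<one>}"
      then obtain x where x: "x \<in> carrier G" and "\<forall>n::nat. 0 < n \<longrightarrow> g \<otimes> x [^] n \<noteq> x [^] n \<otimes> g"
        using assms g by blast
      moreover obtain n :: nat where "0 < n" "x [^] n \<in> H"
        using finite_index_subgroup_pow_mem[OF H x] .
      ultimately show False using central by blast
    qed
  qed
  have "rcosets (carrier G) \<subseteq> {carrier G}"
    unfolding RCOSETS_def using subgroup.rcos_const[OF subgroup_self is_group] by auto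
  then have "finite (rcosets (carrier G))"
    using finite_subset by blast
  then show "{\<one>} \<subseteq> virtual_centre G"
    unfolding virtual_centre_def using subgroup_self by auto
qed

lemma FB_no_power_commutes:
  assumes k: "4 \<le> k" and g: "g \<in> carrier (FB k)" "g \<noteq> \<one>\<^bsub>FB k\<^esub>"
  obtains x where "x \<in> carrier (PFB k)"
    "\<And>n::nat. 0 < n \<Longrightarrow> g \<otimes>\<^bsub>FB k\<^esub> x [^]\<^bsub>FB k\<^esub> n \<noteq> x [^]\<^bsub>FB k\<^esub> n \<otimes>\<^bsub>FB k\<^esub> g"
proof -
  obtain w where w: "w \<in> fb_words k" "g = fb_class k w"
    using g(1) unfolding FB_carrier_iff by blast
  have "(w, []) \<notin> fb_conv k"
    using g(2) w fb_class_eq_iff[of w k "[]"] by (simp add: FB_one)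
  then obtain y where y: "set y \<subseteq> {1..<k}" "word_perm y = id"
    and noncomm: "\<And>n. 0 < n \<Longrightarrow> (w @ word_pow y n, word_pow y n @ w) \<notin> fb_conv k"
    using nontrivial_word_has_noncommuting_pure_word[OF k] w(1) unfolding fb_words_def by blast
  have yw: "y \<in> fb_words k" and "word_pow y n \<in> fb_words k" for n
    using y(1) set_word_pow unfolding fb_words_def by auto
  have "g \<otimes>\<^bsub>FB k\<^esub> fb_class k y [^]\<^bsub>FB k\<^esub> n \<noteq> fb_class k y [^]\<^bsub>FB k\<^esub> n \<otimes>\<^bsub>FB k\<^esub> g"
    if "0 < n" for n :: nat
    using noncomm[OF that] fb_class_eq_iff[of "w @ word_pow y n" k "word_pow y n @ w"]
      \<open>word_pow y n \<in> fb_words k\<close> w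
    by (simp add: FB_nat_pow_class[OF yw] FB_mult_class)
  moreover have "fb_class k y \<in> carrier (PFB k)"
    using yw y(2) by (simp add: PFB_carrier fb_class_in_carrier fb_to_sym_class)
  ultimately show ?thesis using that by blast
qed

lemma PFB_simps:
  "mult (PFB k) = mult (FB k)" "\<one>\<^bsub>PFB k\<^esub> = \<one>\<^bsub>FB k\<^esub>" "x [^]\<^bsub>PFB k\<^esub> (n::nat) = x [^]\<^bsub>FB k\<^esub> n"
  by (simp_all add: PFB_def nat_pow_def)

lemma FB_PFB_no_power_commutes:
  assumes "4 \<le> k" "G \<in> {FB k, PFB k}" "g \<in> carrier G" "g \<noteq> \<one>\<^bsub>G\<^esub>"
  shows "\<exists>x\<in>carrier G. \<forall>n::nat. 0 < n \<longrightarrow> g \<otimes>\<^bsub>G\<^esub> x [^]\<^bsub>G\<^esub> n \<noteq> x [^]\<^bsub>G\<^esub> n \<otimes>\<^bsub>G\<^esub> g"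
proof -
  have "g \<in> carrier (FB k)" "g \<noteq> \<one>\<^bsub>FB k\<^esub>"
    using assms(2-4) by (auto simp: PFB_carrier PFB_simps)
  then obtain x where "x \<in> carrier (PFB k)"
    "\<And>n::nat. 0 < n \<Longrightarrow> g \<otimes>\<^bsub>FB k\<^esub> x [^]\<^bsub>FB k\<^esub> n \<noteq> x [^]\<^bsub>FB k\<^esub> n \<otimes>\<^bsub>FB k\<^esub> g"
    using FB_no_power_commutes[OF assms(1)] by blast
  moreover have "carrier (PFB k) \<subseteq> carrier G"
    using assms(2) by (auto simp: PFB_carrier)
  ultimately show ?thesis
    using assms(2) by (intro bexI[of _ x]) (auto simp: PFB_simps)
qed

theorem corollary2p15:
  fixes k :: nat
  assumes "k \<ge> 4"
  shows "virtual_centre (FB k) = {\<one>\<^bsub>FB k\<^esub>} \<and> virtual_centre (PFB k) = {\<one>\<^bsub>PFB k\<^esub>}"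
proof -
  have "virtual_centre G = {\<one>\<^bsub>G\<^esub>}" if G: "G \<in> {FB k, PFB k}" for G
  proof (rule group.virtual_centre_trivialI)
    show "group G" using G group_FB group_PFB by blast
    show "\<exists>x\<in>carrier G. \<forall>n::nat. 0 < n \<longrightarrow> g \<otimes>\<^bsub>G\<^esub> x [^]\<^bsub>G\<^esub> n \<noteq> x [^]\<^bsub>G\<^esub> n \<otimes>\<^bsub>G\<^esub> g"
      if "g \<in> carrier G" "g \<noteq> \<one>\<^bsub>G\<^esub>" for g
      using FB_PFB_no_power_commutes[OF assms G that] .
  qed
  then show ?thesis by blast
qed

end
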